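(* Let $W^*:=W^*_{1/2}$ start in $0$. Then <ol> <li>for every $\beta>0$, $\sup_{1\le n\le N^\beta}\big|\log_N W^*(n)-\log_N\sqrt n\big|\to0$ almost surely as $N\to\infty$;</li> <li>$\max_{1\le k\le N}\ \max_{\tau_k(W^* )\le n<\tau_{k+1}(W^* )}\big(\log_N k-\log_N W^*(n)\big)\to0$ almost surely as $N\to\infty$.</li> </ol>
   Context: $W_{1/2}^*$ is the Markov chain on $\mathbb N_0$ (a Bessel-like random walk) with $\mathbb P(W^*_{1/2}(1)=1\mid W^*_{1/2}(0)=0)=1$ and $\mathbb P(W^*_{1/2}(1)=k\pm1\mid W^*_{1/2}(0)=k)=\frac12\cdot\frac{k\pm1}{k}$ for $k\in\mathbb N$. For a path $w$, $\tau_k(w):=\min\{n\in\mathbb N_0: w(n)=k\}$. $\log_N x=\log x/\log N$. *)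

theory Defs
  imports "HOL-Probability.Probability"
begin

definition wstar_p :: "nat \<Rightarrow> nat \<Rightarrow> real" where
  "wstar_p k j =
     (if k = 0 then (if j = 1 then 1 else 0)
      else if j = k + 1 then (1/2) * (real (k + 1) / real k)
      else if j + 1 = k then (1/2) * (real (k - 1) / real k)
      else 0)"

definition is_wstar_chain :: "'a measure \<Rightarrow> (nat \<Rightarrow> 'a \<Rightarrow> nat) \<Rightarrow> bool" where
  "is_wstar_chain M W \<longleftrightarrow>
     prob_space M \<and>
     (\<forall>n. W n \<in> measurable M (count_space UNIV)) \<and>
     measure M {\<omega> \<in> space M. W 0 \<omega> = 0} = 1 \<and>
     (\<forall>n (h :: nat list) j. length h = Suc n \<longrightarrow>
        measure M {\<omega> \<in> space M. (\<forall>i\<le>n. W i \<omega> = h ! i) \<and> W (Suc n) \<omega> = j}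
        = measure M {\<omega> \<in> space M. \<forall>i\<le>n. W i \<omega> = h ! i} * wstar_p (last h) j)"

text \<open>First hitting time tau_k(w) = min{n. w n = k} (LEAST; arbitrary if never hit).\<close>
definition hit_time :: "nat \<Rightarrow> (nat \<Rightarrow> nat) \<Rightarrow> nat" where
  "hit_time k w = (LEAST n. w n = k)"

end

theory Submission
  imports Defs "HOL-Real_Asymp.Real_Asymp"
begin

text \<open>The walk is controlled by three functionals: \<open>1/W\<close> is harmonic away from \<open>0\<close> (the drift
  at level \<open>k\<close> is \<open>1/k\<close>), \<open>W\<^sup>2 - 3n\<close> is a martingale, and \<open>sinh (\<theta> W) / W\<close> is an eigenfunction
  with eigenvalue \<open>cosh \<theta>\<close>. They bound, respectively, the probability of coming back down to \<open>j\<close>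
  after reaching \<open>k\<close> by \<open>j/k\<close>, the probability of staying below \<open>b\<close> for \<open>n\<close> steps by
  \<open>O(b\<^sup>2/n)\<close>, and the probability of \<open>W n \<ge> n powr (1/2 + \<delta>)\<close> by \<open>O(exp (- n powr \<delta>))\<close>. Along dyadic
  scales these bounds are summable, so by Borel-Cantelli almost every path eventually stays below
  \<open>n powr (1/2 + \<delta>)\<close>, reaches \<open>2 powr (i (1 - \<delta>))\<close> before time \<open>4 ^ i\<close>, and never falls below
  \<open>2 powr (i (1 - \<delta>))\<close> after reaching \<open>2 ^ i\<close>. On the logarithmic scale these are errors of at
  most \<open>\<delta> ln n\<close> plus a constant, and both limits follow after dividing by \<open>ln N\<close>.\<close>

section \<open>The transition kernel and the histories of the walk\<close>

lemma sum_wstar_p_mult: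
  fixes g :: "nat \<Rightarrow> real"
  assumes "k \<le> n"
  shows "(\<Sum>j\<le>Suc n. wstar_p k j * g j) =
     (if k = 0 then g 1
      else real (k + 1) / (2 * real k) * g (k + 1) + real (k - 1) / (2 * real k) * g (k - 1))"
proof (cases "k = 0")
  case True
  have "(\<Sum>j\<le>Suc n. wstar_p k j * g j) = (\<Sum>j\<in>{1}. wstar_p k j * g j)"
    by (rule sum.mono_neutral_right) (auto simp: wstar_p_def True)
  then show ?thesis using True by (simp add: wstar_p_def)
next
  case False
  have "(\<Sum>j\<le>Suc n. wstar_p k j * g j) = (\<Sum>j\<in>{k + 1, k - 1}. wstar_p k j * g j)"
    by (rule sum.mono_neutral_right) (use assms False in \<open>auto simp: wstar_p_def\<close>)
  also have "\<dots> = wstar_p k (k + 1) * g (k + 1) + wstar_p k (k - 1) * g (k - 1)"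
    by simp
  finally show ?thesis using False by (simp add: wstar_p_def)
qed

lemma frac_mult_frac_cancel: "(x :: real) \<noteq> 0 \<Longrightarrow> x / y * (z / x) = z / y"
  by (simp add: field_simps)

lemma inverse_harmonic:
  assumes "2 \<le> m"
  shows "real (m + 1) / (2 * real m) * (c / real (m + 1)) + real (m - 1) / (2 * real m) * (c / real (m - 1))
    = c / real m"
proof -
  have "real (m + 1) / (2 * real m) * (c / real (m + 1)) = c / (2 * real m)"
    by (rule frac_mult_frac_cancel) simp
  moreover have "real (m - 1) / (2 * real m) * (c / real (m - 1)) = c / (2 * real m)"
    by (rule frac_mult_frac_cancel) (use assms in simp)
  ultimately show ?thesis by simp
qed

lemma wstar_p_eq_0: "j \<noteq> k + 1 \<Longrightarrow> \<not> (2 \<le> k \<and> j + 1 = k) \<Longrightarrow> wstar_p k j = 0"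
  by (auto simp: wstar_p_def)

lemma sum_wstar_p: "k \<le> n \<Longrightarrow> (\<Sum>j\<le>Suc n. wstar_p k j) = 1"
  using sum_wstar_p_mult[of k n "\<lambda>_. 1"] by (auto simp: field_simps of_nat_diff)

lemma sum_wstar_p_mult_const:
  assumes "k \<le> n" and "\<And>j. wstar_p k j \<noteq> 0 \<Longrightarrow> g j = c"
  shows "(\<Sum>j\<le>Suc n. wstar_p k j * g j) = c"
proof -
  have "(\<Sum>j\<le>Suc n. wstar_p k j * g j) = (\<Sum>j\<le>Suc n. wstar_p k j) * c"
    unfolding sum_distrib_right by (intro sum.cong refl) (metis assms(2) mult_zero_left)
  then show ?thesis using sum_wstar_p[OF assms(1)] by simp
qed

text \<open>The walk never steps down from level \<open>1\<close>, since \<open>wstar_p 1 0 = 0\<close>.\<close>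
definition admissible :: "nat list \<Rightarrow> bool" where
  "admissible h \<longleftrightarrow> h \<noteq> [] \<and> h ! 0 = 0 \<and>
     (\<forall>i. Suc i < length h \<longrightarrow> h ! Suc i = h ! i + 1 \<or> (2 \<le> h ! i \<and> h ! Suc i + 1 = h ! i))"

lemma admissible_snoc:
  "admissible (h @ [x]) \<longleftrightarrow>
     (h = [] \<and> x = 0) \<or> (admissible h \<and> (x = last h + 1 \<or> (2 \<le> last h \<and> x + 1 = last h)))"
proof (cases "h = []")
  case True
  then show ?thesis by (auto simp: admissible_def)
next
  case False
  then obtain n where n: "length h = Suc n" by (cases h) auto
  then have last: "last h = h ! n" using False by (simp add: last_conv_nth)
  have step: "(\<forall>i. Suc i < length (h @ [x]) \<longrightarrow> P ((h @ [x]) ! i) ((h @ [x]) ! Suc i)) \<longleftrightarrow>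
      (\<forall>i. Suc i < length h \<longrightarrow> P (h ! i) (h ! Suc i)) \<and> P (last h) x" for P
    using n last by (auto simp: nth_append less_Suc_eq)
  show ?thesis
    using False step[of "\<lambda>a b. b = a + 1 \<or> (2 \<le> a \<and> b + 1 = a)"]
    by (auto simp: admissible_def nth_append)
qed

lemma admissible_nth_bounds:
  "admissible h \<Longrightarrow> i < length h \<Longrightarrow> h ! i \<le> i \<and> (1 \<le> i \<longrightarrow> 1 \<le> h ! i)"
proof (induction i)
  case 0
  then show ?case by (simp add: admissible_def)
next
  case (Suc i)
  then have "h ! Suc i = h ! i + 1 \<or> (2 \<le> h ! i \<and> h ! Suc i + 1 = h ! i)"
    by (simp add: admissible_def)
  then show ?case using Suc by auto
qed

lemma admissible_last_bounds:
  "admissible h \<Longrightarrow> length h = Suc n \<Longrightarrow> last h \<le> n \<and> (1 \<le> n \<longrightarrow> 1 \<le> last h)"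
  using admissible_nth_bounds[of h n] by (auto simp: last_conv_nth admissible_def)

definition histories :: "nat \<Rightarrow> nat list set" where
  "histories n = {h. set h \<subseteq> {..n} \<and> length h = Suc n}"

lemma finite_histories: "finite (histories n)"
  unfolding histories_def by (rule finite_lists_length_eq) simp

lemma admissible_in_histories:
  assumes "admissible h" "length h = Suc n"
  shows "h \<in> histories n"
  using assms admissible_nth_bounds[OF assms(1)]
  by (fastforce simp: histories_def in_set_conv_nth)

lemma histories_Suc:
  "histories (Suc n) =
     (\<lambda>(h, j). h @ [j]) ` ({h. set h \<subseteq> {..Suc n} \<and> length h = Suc n} \<times> {..Suc n})"
proof
  show "histories (Suc n) \<subseteq> (\<lambda>(h, j). h @ [j]) ` ({h. set h \<subseteq> {..Suc n} \<and> length h = Suc n} \<times> {..Suc n})"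
  proof
    fix h assume h: "h \<in> histories (Suc n)"
    then have "h \<noteq> []" by (auto simp: histories_def)
    then have "h = butlast h @ [last h]" and "last h \<in> set h" by simp_all
    moreover have "set (butlast h) \<subseteq> set h" by (auto dest: in_set_butlastD)
    ultimately show "h \<in> (\<lambda>(h, j). h @ [j]) ` ({h. set h \<subseteq> {..Suc n} \<and> length h = Suc n} \<times> {..Suc n})"
      using h by (intro image_eqI[of _ _ "(butlast h, last h)"]) (auto simp: histories_def)
  qed
qed (auto simp: histories_def)

locale wstar_chain =
  fixes M :: "'a measure" and W :: "nat \<Rightarrow> 'a \<Rightarrow> nat"
  assumes is_wstar_chain: "is_wstar_chain M W"
begin

sublocale prob_space M
  using is_wstar_chain by (simp add: is_wstar_chain_def)

lemma measurable_W [measurable]: "W n \<in> measurable M (count_space UNIV)"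
  using is_wstar_chain by (simp add: is_wstar_chain_def)

definition history :: "nat \<Rightarrow> 'a \<Rightarrow> nat list" where
  "history n \<omega> = map (\<lambda>i. W i \<omega>) [0..<Suc n]"

definition hist_prob :: "nat list \<Rightarrow> real" where
  "hist_prob h = measure M {\<omega> \<in> space M. \<forall>i<length h. W i \<omega> = h ! i}"

definition hist_expect :: "nat \<Rightarrow> (nat list \<Rightarrow> real) \<Rightarrow> real" where
  "hist_expect n F = (\<Sum>h\<in>histories n. hist_prob h * F h)"

lemma length_history [simp]: "length (history n \<omega>) = Suc n"
  by (simp add: history_def del: upt_Suc)

lemma nth_history [simp]: "i \<le> n \<Longrightarrow> history n \<omega> ! i = W i \<omega>"
  by (simp add: history_def nth_map_upt del: upt_Suc)

lemma last_history [simp]: "last (history n \<omega>) = W n \<omega>"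
proof -
  have "history n \<omega> \<noteq> []" using length_history[of n \<omega>] by (metis Zero_not_Suc list.size(3))
  then show ?thesis by (simp add: last_conv_nth)
qed

lemma history_eq_iff: "length h = Suc n \<Longrightarrow> history n \<omega> = h \<longleftrightarrow> (\<forall>i<length h. W i \<omega> = h ! i)"
  by (auto simp: list_eq_iff_nth_eq less_Suc_eq_le)

lemma measurable_history [measurable]: "history n \<in> measurable M (count_space UNIV)"
proof (subst measurable_count_space_eq2_countable, safe)
  fix h :: "nat list"
  have "history n -` {h} \<inter> space M =
      (if length h = Suc n then {\<omega> \<in> space M. \<forall>i<length h. W i \<omega> = h ! i} else {})"
    using history_eq_iff[of h n] by auto
  then show "history n -` {h} \<inter> space M \<in> sets M" by simp
qed auto

lemma sets_history: "{\<omega> \<in> space M. history n \<omega> \<in> E} \<in> sets M"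
  by measurable

lemma measure_history_eq: "length h = Suc n \<Longrightarrow> measure M {\<omega> \<in> space M. history n \<omega> = h} = hist_prob h"
  unfolding hist_prob_def by (rule arg_cong[where f = "measure M"]) (use history_eq_iff[of h n] in auto)

lemma hist_prob_snoc:
  assumes "h \<noteq> []"
  shows "hist_prob (h @ [j]) = hist_prob h * wstar_p (last h) j"
proof -
  obtain n where n: "length h = Suc n" using assms by (cases h) auto
  have prefix: "(\<forall>i<length h. W i \<omega> = h ! i) \<longleftrightarrow> (\<forall>i\<le>n. W i \<omega> = h ! i)" for \<omega>
    using n by (simp add: less_Suc_eq_le)
  have "(\<forall>i<length (h @ [j]). W i \<omega> = (h @ [j]) ! i) \<longleftrightarrow> (\<forall>i<length h. W i \<omega> = h ! i) \<and> W (Suc n) \<omega> = j"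
    for \<omega> using n by (auto simp add: All_less_Suc nth_append)
  moreover have "measure M {\<omega> \<in> space M. (\<forall>i\<le>n. W i \<omega> = h ! i) \<and> W (Suc n) \<omega> = j}
      = measure M {\<omega> \<in> space M. \<forall>i\<le>n. W i \<omega> = h ! i} * wstar_p (last h) j"
    using is_wstar_chain n unfolding is_wstar_chain_def by blast
  ultimately show ?thesis by (simp add: hist_prob_def prefix)
qed

lemma hist_prob_single: "hist_prob [x] = (if x = 0 then 1 else 0)"
proof -
  have start: "measure M {\<omega> \<in> space M. W 0 \<omega> = 0} = 1"
    using is_wstar_chain by (simp add: is_wstar_chain_def)
  have "measure M {\<omega> \<in> space M. W 0 \<omega> = x} = 0" if "x \<noteq> 0"
  proof -
    have "measure M {\<omega> \<in> space M. W 0 \<omega> = x} \<le> measure M (space M - {\<omega> \<in> space M. W 0 \<omega> = 0})"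
      using that by (intro finite_measure_mono) auto
    also have "\<dots> = 0" using start by (subst prob_compl) simp_all
    finally show ?thesis by (simp add: measure_le_0_iff)
  qed
  then show ?thesis using start by (simp add: hist_prob_def)
qed

lemma hist_prob_eq_0_if_not_admissible:
  "h \<noteq> [] \<Longrightarrow> \<not> admissible h \<Longrightarrow> hist_prob h = 0"
proof (induction h rule: rev_induct)
  case (snoc x h)
  show ?case
  proof (cases "h = []")
    case True
    then show ?thesis using snoc.prems hist_prob_single[of x] by (simp add: admissible_def)
  next
    case False
    then have "hist_prob h = 0 \<or> wstar_p (last h) x = 0"
      using snoc wstar_p_eq_0[of x "last h"] by (auto simp: admissible_snoc)
    then show ?thesis by (simp add: hist_prob_snoc False)
  qed
qed simp

lemma hist_prob_eq_0_outside_histories: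
  assumes "length h = Suc n" "h \<notin> histories n"
  shows "hist_prob h = 0"
proof (rule hist_prob_eq_0_if_not_admissible)
  show "h \<noteq> []" using assms(1) by auto
  show "\<not> admissible h" using assms admissible_in_histories by blast
qed

lemma hist_expect_Suc:
  "hist_expect (Suc n) F = hist_expect n (\<lambda>h. \<Sum>j\<le>Suc n. wstar_p (last h) j * F (h @ [j]))"
proof -
  let ?H = "{h. set h \<subseteq> {..Suc n} \<and> length h = Suc n}"
  have fin: "finite ?H" by (rule finite_lists_length_eq) simp
  have inj: "inj_on (\<lambda>(h, j). h @ [j]) (?H \<times> {..Suc n})"
    by (auto simp: inj_on_def)
  have "hist_expect (Suc n) F = (\<Sum>(h, j)\<in>?H \<times> {..Suc n}. hist_prob (h @ [j]) * F (h @ [j]))"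
    unfolding hist_expect_def histories_Suc by (subst sum.reindex[OF inj]) (simp add: case_prod_unfold)
  also have "\<dots> = (\<Sum>h\<in>?H. hist_prob h * (\<Sum>j\<le>Suc n. wstar_p (last h) j * F (h @ [j])))"
    unfolding sum.cartesian_product[symmetric] sum_distrib_left
  proof (intro sum.cong refl)
    fix h j assume "h \<in> ?H"
    then have "h \<noteq> []" by auto
    then show "hist_prob (h @ [j]) * F (h @ [j]) = hist_prob h * (wstar_p (last h) j * F (h @ [j]))"
      by (simp add: hist_prob_snoc)
  qed
  also have "\<dots> = (\<Sum>h\<in>histories n. hist_prob h * (\<Sum>j\<le>Suc n. wstar_p (last h) j * F (h @ [j])))"
  proof (rule sum.mono_neutral_right[OF fin])
    show "histories n \<subseteq> ?H" by (auto simp: histories_def)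
    show "\<forall>h\<in>?H - histories n. hist_prob h * (\<Sum>j\<le>Suc n. wstar_p (last h) j * F (h @ [j])) = 0"
      using hist_prob_eq_0_outside_histories by auto
  qed
  finally show ?thesis by (simp add: hist_expect_def)
qed

lemma hist_expect_0: "hist_expect 0 F = F [0]"
proof -
  have "histories 0 = {[0]}" by (auto simp: histories_def length_Suc_conv)
  then show ?thesis by (simp add: hist_expect_def hist_prob_single)
qed

lemma hist_expect_1: "hist_expect 1 F = F [0, 1]"
  using sum_wstar_p_mult[of 0 0 "\<lambda>j. F [0, j]"] by (simp add: hist_expect_Suc hist_expect_0)

lemma hist_expect_cmult: "hist_expect n (\<lambda>h. c * F h) = c * hist_expect n F"
  by (simp add: hist_expect_def sum_distrib_left algebra_simps)

lemma hist_expect_mono: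
  assumes "\<And>h. admissible h \<Longrightarrow> length h = Suc n \<Longrightarrow> F h \<le> G h"
  shows "hist_expect n F \<le> hist_expect n G"
  unfolding hist_expect_def
proof (rule sum_mono)
  fix h assume h: "h \<in> histories n"
  then have "h \<noteq> []" by (auto simp: histories_def)
  show "hist_prob h * F h \<le> hist_prob h * G h"
  proof (cases "admissible h")
    case True
    then show ?thesis
      using assms h by (intro mult_left_mono) (auto simp: histories_def hist_prob_def)
  qed (simp add: hist_prob_eq_0_if_not_admissible \<open>h \<noteq> []\<close>)
qed

lemma hist_expect_cong:
  "(\<And>h. admissible h \<Longrightarrow> length h = Suc n \<Longrightarrow> F h = G h) \<Longrightarrow> hist_expect n F = hist_expect n G"
  by (intro antisym hist_expect_mono) auto

lemma hist_expect_one: "hist_expect n (\<lambda>_. 1) = 1"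
proof (induction n)
  case (Suc n)
  have "hist_expect (Suc n) (\<lambda>_. 1) = hist_expect n (\<lambda>h. \<Sum>j\<le>Suc n. wstar_p (last h) j)"
    by (simp add: hist_expect_Suc)
  also have "\<dots> = hist_expect n (\<lambda>_. 1)"
    by (rule hist_expect_cong) (use admissible_last_bounds sum_wstar_p in auto)
  finally show ?case using Suc by simp
qed (simp add: hist_expect_0)

lemma hist_expect_le_pow:
  assumes step: "\<And>h n. admissible h \<Longrightarrow> length h = Suc n \<Longrightarrow> m \<le> n \<Longrightarrow>
      (\<Sum>j\<le>Suc n. wstar_p (last h) j * F (h @ [j])) \<le> c * F h"
    and "c \<ge> 0" and "m \<le> N"
  shows "hist_expect N F \<le> c ^ (N - m) * hist_expect m F"
  using \<open>m \<le> N\<close>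
proof (induction N rule: dec_induct)
  case (step N)
  have "hist_expect (Suc N) F = hist_expect N (\<lambda>h. \<Sum>j\<le>Suc N. wstar_p (last h) j * F (h @ [j]))"
    by (rule hist_expect_Suc)
  also have "\<dots> \<le> hist_expect N (\<lambda>h. c * F h)"
    using step.hyps by (intro hist_expect_mono assms(1)) auto
  also have "\<dots> \<le> c ^ (Suc N - m) * hist_expect m F"
    using mult_left_mono[OF step.IH \<open>c \<ge> 0\<close>] step.hyps
    by (simp add: hist_expect_cmult Suc_diff_le mult.assoc)
  finally show ?case .
qed simp

lemma prob_history_in: "prob {\<omega> \<in> space M. history n \<omega> \<in> E} = (\<Sum>h\<in>histories n \<inter> E. hist_prob h)"
proof -
  have disj: "disjoint_family_on (\<lambda>h. {\<omega> \<in> space M. history n \<omega> = h}) A" for A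
    by (auto simp: disjoint_family_on_def)
  have sum_eq: "prob {\<omega> \<in> space M. history n \<omega> \<in> A} = (\<Sum>h\<in>A. hist_prob h)"
    if "A \<subseteq> histories n" for A
  proof -
    have "finite A" using that finite_histories by (rule finite_subset)
    have "{\<omega> \<in> space M. history n \<omega> \<in> A} = (\<Union>h\<in>A. {\<omega> \<in> space M. history n \<omega> = h})" by auto
    then have "prob {\<omega> \<in> space M. history n \<omega> \<in> A} = (\<Sum>h\<in>A. prob {\<omega> \<in> space M. history n \<omega> = h})"
      using \<open>finite A\<close> disj
      by (auto intro!: measure_finite_Union sets_history[of n "{_}", simplified])
    also have "\<dots> = (\<Sum>h\<in>A. hist_prob h)"
      using that by (intro sum.cong refl measure_history_eq) (auto simp: histories_def)
    finally show ?thesis .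
  qed
  have "prob {\<omega> \<in> space M. history n \<omega> \<in> histories n} = 1"
    using sum_eq[of "histories n"] hist_expect_one by (simp add: hist_expect_def)
  then have "prob {\<omega> \<in> space M. history n \<omega> \<in> E - histories n} = 0"
    using prob_compl[OF sets_history[of n "histories n"]]
          finite_measure_mono[of "{\<omega> \<in> space M. history n \<omega> \<in> E - histories n}"
            "space M - {\<omega> \<in> space M. history n \<omega> \<in> histories n}"]
    by (auto simp: measure_le_0_iff)
  moreover have "{\<omega> \<in> space M. history n \<omega> \<in> E} =
      {\<omega> \<in> space M. history n \<omega> \<in> histories n \<inter> E} \<union> {\<omega> \<in> space M. history n \<omega> \<in> E - histories n}"
    by auto
  ultimately show ?thesis
    using sum_eq[of "histories n \<inter> E"] by (simp add: finite_measure_Union sets_history disjoint_iff)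
qed

lemma prob_history_le_hist_expect:
  assumes nonneg: "\<And>h. admissible h \<Longrightarrow> length h = Suc n \<Longrightarrow> F h \<ge> 0"
    and ge_1: "\<And>h. admissible h \<Longrightarrow> length h = Suc n \<Longrightarrow> h \<in> E \<Longrightarrow> F h \<ge> 1"
  shows "prob {\<omega> \<in> space M. history n \<omega> \<in> E} \<le> hist_expect n F"
proof -
  have "prob {\<omega> \<in> space M. history n \<omega> \<in> E} = hist_expect n (\<lambda>h. of_bool (h \<in> E))"
    unfolding prob_history_in hist_expect_def sum.inter_restrict[OF finite_histories]
    by (intro sum.cong refl) simp
  also have "\<dots> \<le> hist_expect n F"
  proof (rule hist_expect_mono)
    fix h assume "admissible h" "length h = Suc n"
    then show "of_bool (h \<in> E) \<le> F h" using nonneg ge_1 by (cases "h \<in> E") simp_all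
  qed
  finally show ?thesis .
qed

lemma AE_admissible_history: "AE \<omega> in M. \<forall>n. admissible (history n \<omega>)"
proof (subst AE_all_countable, rule allI)
  fix n
  have "prob {\<omega> \<in> space M. history n \<omega> \<in> {h. admissible h}} = (\<Sum>h\<in>histories n. hist_prob h)"
    unfolding prob_history_in
  proof (intro sum.mono_neutral_left finite_histories ballI)
    fix h assume "h \<in> histories n - histories n \<inter> {h. admissible h}"
    then show "hist_prob h = 0"
      by (intro hist_prob_eq_0_if_not_admissible) (auto simp: histories_def)
  qed auto
  also have "\<dots> = 1" using hist_expect_one[of n] by (simp add: hist_expect_def)
  finally have "AE \<omega> in M. \<omega> \<in> {\<omega> \<in> space M. history n \<omega> \<in> {h. admissible h}}"
    by (intro AE_prob_1)
  then show "AE \<omega> in M. admissible (history n \<omega>)" by eventually_elim simp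
qed

end

section \<open>Three martingale estimates\<close>

definition reaches :: "nat \<Rightarrow> nat list \<Rightarrow> bool" where
  "reaches k h \<longleftrightarrow> (\<exists>t<length h. k \<le> h ! t)"

definition returns_below :: "nat \<Rightarrow> nat \<Rightarrow> nat list \<Rightarrow> bool" where
  "returns_below k j h \<longleftrightarrow> (\<exists>t s. t \<le> s \<and> s < length h \<and> k \<le> h ! t \<and> h ! s \<le> j)"

lemma reaches_snoc: "reaches k (h @ [x]) \<longleftrightarrow> reaches k h \<or> k \<le> x"
proof -
  have "\<forall>i<length h. (h @ [x]) ! i = h ! i" by (simp add: nth_append)
  then show ?thesis by (auto simp: reaches_def Ex_less_Suc)
qed

lemma reaches_if_returns_below: "returns_below k j h \<Longrightarrow> reaches k h"
  unfolding returns_below_def reaches_def by (meson le_less_trans)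

lemma last_less_if_not_reaches:
  assumes "h \<noteq> []" "\<not> reaches k h"
  shows "last h < k"
proof -
  have "length h - 1 < length h" using assms(1) by simp
  then show ?thesis using assms by (auto simp: reaches_def last_conv_nth not_le)
qed

lemma returns_below_snoc:
  assumes "j < k"
  shows "returns_below k j (h @ [x]) \<longleftrightarrow> returns_below k j h \<or> (reaches k h \<and> x \<le> j)"
proof
  assume "returns_below k j (h @ [x])"
  then obtain t s where ts: "t \<le> s" "s \<le> length h" "k \<le> (h @ [x]) ! t" "(h @ [x]) ! s \<le> j"
    by (auto simp: returns_below_def)
  show "returns_below k j h \<or> (reaches k h \<and> x \<le> j)"
  proof (cases "s = length h")
    case True
    with ts assms have "t < length h" by (metis le_neq_implies_less nth_append_length order.trans not_le)
    then show ?thesis using ts True by (auto simp: reaches_def nth_append)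
  next
    case False
    then have "s < length h" "t < length h" using ts by auto
    then show ?thesis using ts unfolding returns_below_def by (auto simp: nth_append)
  qed
next
  assume "returns_below k j h \<or> (reaches k h \<and> x \<le> j)"
  then show "returns_below k j (h @ [x])"
  proof
    assume "returns_below k j h"
    then obtain t s where "t \<le> s" "s < length h" "k \<le> h ! t" "h ! s \<le> j"
      by (auto simp: returns_below_def)
    then show ?thesis unfolding returns_below_def
      by (intro exI[of _ t] exI[of _ s]) (simp add: nth_append)
  next
    assume "reaches k h \<and> x \<le> j"
    then obtain t where "t < length h" "k \<le> h ! t" "x \<le> j" by (auto simp: reaches_def)
    then show ?thesis unfolding returns_below_def
      by (intro exI[of _ t] exI[of _ "length h"]) (simp add: nth_append)
  qed
qed

lemma last_gt_if_not_returns_below: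
  assumes "h \<noteq> []" "reaches k h" "\<not> returns_below k j h"
  shows "j < last h"
proof (rule ccontr)
  assume "\<not> j < last h"
  obtain t where "t < length h" "k \<le> h ! t" using assms(2) by (auto simp: reaches_def)
  moreover have "last h = h ! (length h - 1)" using assms(1) by (simp add: last_conv_nth)
  ultimately have "t \<le> length h - 1 \<and> length h - 1 < length h \<and> k \<le> h ! t \<and> h ! (length h - 1) \<le> j"
    using \<open>\<not> j < last h\<close> by auto
  then have "returns_below k j h" unfolding returns_below_def by blast
  with assms(3) show False ..
qed

definition return_fn :: "nat \<Rightarrow> nat \<Rightarrow> nat list \<Rightarrow> real" where
  "return_fn k j h =
     (if returns_below k j h then 1 else if reaches k h then real j / real (last h) else real j / real k)"

lemma return_fn_step:
  assumes h: "admissible h" "length h = Suc n" and j: "1 \<le> j" "j < k"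
  shows "(\<Sum>x\<le>Suc n. wstar_p (last h) x * return_fn k j (h @ [x])) = return_fn k j h"
proof -
  let ?m = "last h"
  have m: "?m \<le> n" using admissible_last_bounds[OF h] by simp
  have "h \<noteq> []" using h(2) by auto
  consider "returns_below k j h" | "\<not> returns_below k j h" "reaches k h" | "\<not> reaches k h"
    by blast
  then show ?thesis
  proof cases
    case 1
    then show ?thesis
      by (subst sum_wstar_p_mult_const[OF m, of _ 1]) (simp_all add: return_fn_def returns_below_snoc j)
  next
    case 2
    then have "j < ?m" using last_gt_if_not_returns_below \<open>h \<noteq> []\<close> by blast
    then have "2 \<le> ?m" using j by simp
    have "return_fn k j (h @ [?m + 1]) = real j / real (?m + 1)"
      "return_fn k j (h @ [?m - 1]) = real j / real (?m - 1)"
      using 2 \<open>j < ?m\<close> j by (auto simp: return_fn_def returns_below_snoc reaches_snoc)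
    then show ?thesis
      unfolding sum_wstar_p_mult[OF m] inverse_harmonic[OF \<open>2 \<le> ?m\<close>]
      using 2 \<open>2 \<le> ?m\<close> by (simp add: return_fn_def)
  next
    case 3
    then have "?m < k" using \<open>h \<noteq> []\<close> by (intro last_less_if_not_reaches)
    have "return_fn k j (h @ [x]) = real j / real k" if "wstar_p ?m x \<noteq> 0" for x
    proof -
      have "x = ?m + 1 \<or> (2 \<le> ?m \<and> x + 1 = ?m)" using that wstar_p_eq_0 by blast
      then show ?thesis using 3 \<open>?m < k\<close> j reaches_if_returns_below
        by (auto simp: return_fn_def returns_below_snoc reaches_snoc)
    qed
    then show ?thesis
      using 3 by (subst sum_wstar_p_mult_const[OF m]) (auto simp: return_fn_def reaches_if_returns_below)
  qed
qed

definition exit_fn :: "nat \<Rightarrow> nat list \<Rightarrow> real" where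
  "exit_fn b h = (if reaches b h then 0 else 3 * real (length h - 1) - real (last h) ^ 2 + real b ^ 2)"

lemma exit_fn_ge_if_not_reaches:
  assumes "h \<noteq> []" "\<not> reaches b h"
  shows "exit_fn b h \<ge> 3 * real (length h - 1)"
proof -
  have "real (last h) ^ 2 \<le> real b ^ 2"
    using last_less_if_not_reaches[OF assms] by (intro power_mono) auto
  then show ?thesis unfolding exit_fn_def if_not_P[OF assms(2)] by linarith
qed

lemma exit_fn_nonneg: "h \<noteq> [] \<Longrightarrow> exit_fn b h \<ge> 0"
  using exit_fn_ge_if_not_reaches[of h b] by (cases "reaches b h") (simp add: exit_fn_def, linarith)

lemma exit_fn_step:
  assumes h: "admissible h" "length h = Suc n" and "1 \<le> n"
  shows "(\<Sum>x\<le>Suc n. wstar_p (last h) x * exit_fn b (h @ [x])) \<le> exit_fn b h"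
proof (cases "reaches b h")
  case True
  have "(\<Sum>x\<le>Suc n. wstar_p (last h) x * exit_fn b (h @ [x])) = 0"
    using True admissible_last_bounds[OF h]
    by (intro sum_wstar_p_mult_const) (auto simp: exit_fn_def reaches_snoc)
  then show ?thesis using True by (simp add: exit_fn_def)
next
  case False
  let ?m = "last h"
  have m: "1 \<le> ?m" "?m \<le> n" using admissible_last_bounds[OF h] \<open>1 \<le> n\<close> by auto
  have "?m < b"
    using False h(2) by (intro last_less_if_not_reaches) auto
  define g where "g x = 3 * real (Suc n) - real x ^ 2 + real b ^ 2" for x :: nat
  have up: "exit_fn b (h @ [?m + 1]) \<le> g (?m + 1)"
  proof (cases "b = ?m + 1")
    case True
    then show ?thesis by (simp add: exit_fn_def g_def reaches_snoc)
  next
    case False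
    then show ?thesis using \<open>\<not> reaches b h\<close> \<open>?m < b\<close> h(2) by (simp add: exit_fn_def g_def reaches_snoc)
  qed
  have down: "exit_fn b (h @ [?m - 1]) = g (?m - 1)"
    using False \<open>?m < b\<close> h(2) by (auto simp: exit_fn_def g_def reaches_snoc)
  have "(\<Sum>x\<le>Suc n. wstar_p ?m x * exit_fn b (h @ [x])) =
      real (?m + 1) / (2 * real ?m) * exit_fn b (h @ [?m + 1]) +
      real (?m - 1) / (2 * real ?m) * exit_fn b (h @ [?m - 1])"
    unfolding sum_wstar_p_mult[OF m(2)] using m by simp
  also have "\<dots> \<le> real (?m + 1) / (2 * real ?m) * g (?m + 1) + real (?m - 1) / (2 * real ?m) * g (?m - 1)"
    using up down by (intro add_mono mult_left_mono) auto
  also have "\<dots> = exit_fn b h"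
    using m False h(2) by (simp add: g_def exit_fn_def of_nat_diff field_simps power2_eq_square)
  finally show ?thesis .
qed

definition sinh_fn :: "real \<Rightarrow> nat list \<Rightarrow> real" where
  "sinh_fn \<theta> h = sinh (\<theta> * real (last h)) / real (last h)"

lemma sinh_fn_step:
  assumes "1 \<le> last h" "last h \<le> n"
  shows "(\<Sum>x\<le>Suc n. wstar_p (last h) x * sinh_fn \<theta> (h @ [x])) = cosh \<theta> * sinh_fn \<theta> h"
proof -
  let ?m = "real (last h)"
  have up: "\<theta> * real (last h + 1) = \<theta> * ?m + \<theta>" by (simp add: algebra_simps)
  have down: "\<theta> * real (last h - 1) = \<theta> * ?m - \<theta>" using assms(1) by (simp add: of_nat_diff algebra_simps)
  have "(\<Sum>x\<le>Suc n. wstar_p (last h) x * sinh_fn \<theta> (h @ [x])) =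
      real (last h + 1) / (2 * ?m) * sinh_fn \<theta> (h @ [last h + 1]) +
      real (last h - 1) / (2 * ?m) * sinh_fn \<theta> (h @ [last h - 1])"
    unfolding sum_wstar_p_mult[OF assms(2)] using assms(1) by simp
  also have "\<dots> = (sinh (\<theta> * ?m + \<theta>) + sinh (\<theta> * ?m - \<theta>)) / (2 * ?m)"
  proof (cases "last h = 1")
    case False
    then have "real (last h + 1) \<noteq> 0" "real (last h - 1) \<noteq> 0" using assms(1) by auto
    then show ?thesis
      unfolding sinh_fn_def last_snoc add_divide_distrib
      by (subst (1 2) frac_mult_frac_cancel) (simp_all only: up down not_False_eq_True)
  qed (simp add: sinh_fn_def)
  also have "\<dots> = cosh \<theta> * sinh_fn \<theta> h"
    using assms(1) by (simp add: sinh_add sinh_diff sinh_fn_def field_simps)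
  finally show ?thesis .
qed

context wstar_chain
begin

lemma reaches_history: "reaches k (history n \<omega>) \<longleftrightarrow> (\<exists>t\<le>n. k \<le> W t \<omega>)"
  by (auto simp: reaches_def less_Suc_eq_le)

lemma returns_below_history:
  "returns_below k j (history n \<omega>) \<longleftrightarrow> (\<exists>t s. t \<le> s \<and> s \<le> n \<and> k \<le> W t \<omega> \<and> W s \<omega> \<le> j)"
proof -
  have "t \<le> s \<Longrightarrow> s \<le> n \<Longrightarrow> history n \<omega> ! t = W t \<omega> \<and> history n \<omega> ! s = W s \<omega>" for t s
    by simp
  then show ?thesis unfolding returns_below_def length_history less_Suc_eq_le by metis
qed

lemma prob_return_below_le:
  assumes "1 \<le> j" "j < k"
  shows "prob {\<omega> \<in> space M. \<exists>t s. t \<le> s \<and> k \<le> W t \<omega> \<and> W s \<omega> \<le> j} \<le> real j / real k"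
proof -
  define A where "A n = {\<omega> \<in> space M. returns_below k j (history n \<omega>)}" for n
  have bound: "prob (A n) \<le> real j / real k" for n
  proof -
    have "prob (A n) = prob {\<omega> \<in> space M. history n \<omega> \<in> Collect (returns_below k j)}"
      by (simp add: A_def)
    also have "\<dots> \<le> hist_expect n (return_fn k j)"
      by (rule prob_history_le_hist_expect) (simp_all add: return_fn_def)
    also have "\<dots> \<le> 1 ^ (n - 0) * hist_expect 0 (return_fn k j)"
    proof (rule hist_expect_le_pow)
      fix h n assume "admissible h" "length h = Suc n"
      from return_fn_step[OF this assms]
      show "(\<Sum>x\<le>Suc n. wstar_p (last h) x * return_fn k j (h @ [x])) \<le> 1 * return_fn k j h"
        by simp
    qed simp_all
    also have "\<dots> = real j / real k"
      using assms by (simp add: hist_expect_0 return_fn_def returns_below_def reaches_def)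
    finally show ?thesis .
  qed
  have "incseq A"
    unfolding incseq_def A_def returns_below_history by (auto intro: order_trans)
  moreover have "range A \<subseteq> sets M" by (auto simp: A_def)
  ultimately have "(\<lambda>n. prob (A n)) \<longlonglongrightarrow> prob (\<Union>n. A n)"
    by (intro finite_Lim_measure_incseq) auto
  then have "prob (\<Union>n. A n) \<le> real j / real k"
    using bound by (intro LIMSEQ_le_const2) auto
  moreover have "(\<Union>n. A n) = {\<omega> \<in> space M. \<exists>t s. t \<le> s \<and> k \<le> W t \<omega> \<and> W s \<omega> \<le> j}"
    unfolding A_def returns_below_history by auto
  ultimately show ?thesis by simp
qed

lemma prob_stay_below_le:
  assumes "2 \<le> b" "1 \<le> n"
  shows "prob {\<omega> \<in> space M. \<forall>s\<le>n. W s \<omega> < b} \<le> (2 + real b ^ 2) / (3 * real n)"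
proof -
  define F where "F h = exit_fn b h / (3 * real n)" for h
  have "prob {\<omega> \<in> space M. \<forall>s\<le>n. W s \<omega> < b} = prob {\<omega> \<in> space M. history n \<omega> \<in> {h. \<not> reaches b h}}"
    by (simp add: reaches_history not_le) (meson not_le)
  also have "\<dots> \<le> hist_expect n F"
  proof (rule prob_history_le_hist_expect)
    fix h assume h: "admissible h" "length h = Suc n"
    then have "h \<noteq> []" by auto
    then show "F h \<ge> 0" using exit_fn_nonneg[of h b] by (simp add: F_def[abs_def])
    assume "h \<in> {h. \<not> reaches b h}"
    then have "exit_fn b h \<ge> 3 * real n"
      using exit_fn_ge_if_not_reaches[OF \<open>h \<noteq> []\<close>, of b] h(2) by auto
    then show "F h \<ge> 1" using assms by (simp add: F_def[abs_def])
  qed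
  also have "hist_expect n F = hist_expect n (exit_fn b) / (3 * real n)"
    using hist_expect_cmult[of n "1 / (3 * real n)" "exit_fn b"] by (simp add: F_def[abs_def])
  also have "hist_expect n (exit_fn b) \<le> 1 ^ (n - 1) * hist_expect 1 (exit_fn b)"
    using exit_fn_step assms by (intro hist_expect_le_pow) (auto simp del: sum.atMost_Suc)
  also have "hist_expect 1 (exit_fn b) = 2 + real b ^ 2"
    using assms unfolding hist_expect_1 by (auto simp: exit_fn_def reaches_def less_Suc_eq)
  finally show ?thesis by (simp add: divide_right_mono)
qed

lemma prob_W_ge_le:
  assumes "\<theta> > 0" "a > 0" "1 \<le> n"
  shows "prob {\<omega> \<in> space M. a \<le> real (W n \<omega>)} \<le> real n * sinh \<theta> * cosh \<theta> ^ n / sinh (\<theta> * a)"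
proof -
  have sinh_a: "sinh (\<theta> * a) > 0" using assms by simp
  define F where "F h = real n / sinh (\<theta> * a) * sinh_fn \<theta> h" for h
  have "prob {\<omega> \<in> space M. a \<le> real (W n \<omega>)} = prob {\<omega> \<in> space M. history n \<omega> \<in> {h. a \<le> real (last h)}}"
    by simp
  also have "\<dots> \<le> hist_expect n F"
  proof (rule prob_history_le_hist_expect)
    fix h assume h: "admissible h" "length h = Suc n"
    then have last: "1 \<le> last h" "last h \<le> n" using admissible_last_bounds[OF h] assms by auto
    then show "F h \<ge> 0" using assms sinh_a by (simp add: F_def sinh_fn_def)
    assume "h \<in> {h. a \<le> real (last h)}"
    then have "sinh (\<theta> * a) \<le> sinh (\<theta> * real (last h))" using assms by simp
    then have "sinh (\<theta> * a) * real (last h) \<le> sinh (\<theta> * real (last h)) * real n"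
      using last sinh_a by (intro mult_mono) auto
    then show "F h \<ge> 1" using last sinh_a by (simp add: F_def sinh_fn_def field_simps)
  qed
  also have "hist_expect n F = real n / sinh (\<theta> * a) * hist_expect n (sinh_fn \<theta>)"
    unfolding F_def by (rule hist_expect_cmult)
  also have "hist_expect n (sinh_fn \<theta>) \<le> cosh \<theta> ^ (n - 1) * hist_expect 1 (sinh_fn \<theta>)"
    using sinh_fn_step admissible_last_bounds assms
    by (intro hist_expect_le_pow) (auto simp del: sum.atMost_Suc intro: order.trans[OF zero_le_one cosh_real_ge_1])
  also have "\<dots> \<le> cosh \<theta> ^ n * sinh \<theta>"
    using cosh_real_ge_1[of \<theta>] assms
    unfolding hist_expect_1 by (auto simp: sinh_fn_def intro!: mult_right_mono power_increasing)
  finally show ?thesis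
    using assms sinh_a by (simp add: divide_right_mono mult_left_mono field_simps)
qed

end

section \<open>Almost sure growth along dyadic scales\<close>

locale wstar_path =
  fixes w :: "nat \<Rightarrow> nat"
  assumes start: "w 0 = 0"
    and step: "\<And>n. w (Suc n) = w n + 1 \<or> (2 \<le> w n \<and> w (Suc n) + 1 = w n)"

definition below_powr :: "real \<Rightarrow> (nat \<Rightarrow> nat) \<Rightarrow> bool" where
  "below_powr \<delta> w \<longleftrightarrow> (\<forall>\<^sub>F n in sequentially. real (w n) < real n powr (1/2 + \<delta>))"

definition no_deep_return :: "real \<Rightarrow> (nat \<Rightarrow> nat) \<Rightarrow> bool" where
  "no_deep_return \<delta> w \<longleftrightarrow>
     (\<forall>\<^sub>F i in sequentially. \<forall>t s. t \<le> s \<longrightarrow> 2 ^ i \<le> w t \<longrightarrow> 2 powr (real i * (1 - \<delta>)) < real (w s))"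

definition fast_escape :: "real \<Rightarrow> (nat \<Rightarrow> nat) \<Rightarrow> bool" where
  "fast_escape \<delta> w \<longleftrightarrow> (\<forall>\<^sub>F i in sequentially. \<exists>s\<le>4 ^ i. 2 powr (real i * (1 - \<delta>)) \<le> real (w s))"

lemma below_powr_mono: "\<delta> \<le> \<delta>' \<Longrightarrow> below_powr \<delta> w \<Longrightarrow> below_powr \<delta>' w"
  unfolding below_powr_def
  by (erule eventually_mono[OF eventually_conj[OF eventually_ge_at_top[of 1]]])
     (smt (verit) of_nat_1 of_nat_le_iff powr_mono)

lemma no_deep_return_mono: "\<delta> \<le> \<delta>' \<Longrightarrow> no_deep_return \<delta> w \<Longrightarrow> no_deep_return \<delta>' w"
  unfolding no_deep_return_def
  by (erule eventually_mono) (smt (verit) mult_left_mono of_nat_0_le_iff powr_mono)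

lemma fast_escape_mono: "\<delta> \<le> \<delta>' \<Longrightarrow> fast_escape \<delta> w \<Longrightarrow> fast_escape \<delta>' w"
  unfolding fast_escape_def
  by (erule eventually_mono) (smt (verit) mult_left_mono of_nat_0_le_iff powr_mono)

lemma (in prob_space) AE_eventually_not_in:
  assumes "\<And>n. A n \<in> sets M" and "\<And>n. n \<ge> N \<Longrightarrow> prob (A n) \<le> B n" and "summable B"
  shows "AE \<omega> in M. \<forall>\<^sub>F n in sequentially. \<omega> \<notin> A n"
proof -
  have "summable (\<lambda>n. prob (A n))"
    by (rule summable_comparison_test'[OF assms(3), of N]) (use assms(2) in auto)
  then have "AE \<omega> in M. \<forall>\<^sub>F n in sequentially. \<omega> \<in> space M - A n"
    using assms(1) by (intro borel_cantelli_AE1) (auto simp: emeasure_eq_measure)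
  then show ?thesis by eventually_elim (auto elim: eventually_mono)
qed

lemma (in prob_space) AE_all_pos_if_mono:
  fixes P :: "real \<Rightarrow> 'a \<Rightarrow> bool"
  assumes AE: "\<And>\<delta>. 0 < \<delta> \<Longrightarrow> \<delta> < 1 \<Longrightarrow> AE \<omega> in M. P \<delta> \<omega>"
    and mono: "\<And>\<delta> \<delta>' \<omega>. \<delta> \<le> \<delta>' \<Longrightarrow> P \<delta> \<omega> \<Longrightarrow> P \<delta>' \<omega>"
  shows "AE \<omega> in M. \<forall>\<delta>>0. P \<delta> \<omega>"
proof -
  have "AE \<omega> in M. \<forall>m::nat. P (1 / (real m + 2)) \<omega>"
    by (subst AE_all_countable) (auto intro: AE)
  then show ?thesis
  proof eventually_elim
    case (elim \<omega>)
    show ?case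
    proof (intro allI impI)
      fix \<delta> :: real assume "\<delta> > 0"
      then obtain m where "inverse (real (Suc m)) < \<delta>" using reals_Archimedean by blast
      moreover have "1 / (real m + 2) \<le> inverse (real (Suc m))"
        by (simp add: inverse_eq_divide frac_le)
      ultimately show "P \<delta> \<omega>" using elim mono[of "1 / (real m + 2)" \<delta>] by force
    qed
  qed
qed

lemma nat_ceiling_le_double:
  assumes "1 \<le> (x :: real)"
  shows "x \<le> real (nat \<lceil>x\<rceil>)" "real (nat \<lceil>x\<rceil>) \<le> 2 * x"
proof -
  have "real (nat \<lceil>x\<rceil>) = of_int \<lceil>x\<rceil>" using assms by simp
  then show "x \<le> real (nat \<lceil>x\<rceil>)" "real (nat \<lceil>x\<rceil>) \<le> 2 * x"
    using assms ceiling_correct[of x] by linarith+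
qed

lemma dyadic_powr_square_div: "(2 powr (real i * (1 - \<delta>))) ^ 2 / 4 ^ i = 2 powr (- (2 * real i * \<delta>))"
proof -
  have "(2 powr (real i * (1 - \<delta>))) ^ 2 = 2 powr (2 * real i * (1 - \<delta>))"
    unfolding power2_eq_square powr_add[symmetric] by (simp add: algebra_simps)
  moreover have "(4::real) ^ i = 2 powr (2 * real i)"
    using powr_realpow[of 2 "2 * i"] by (simp add: power_mult)
  ultimately have "(2 powr (real i * (1 - \<delta>))) ^ 2 / 4 ^ i = 2 powr (2 * real i * (1 - \<delta>)) / 2 powr (2 * real i)"
    by simp
  also have "\<dots> = 2 powr (- (2 * real i * \<delta>))"
    unfolding powr_diff[symmetric] by (simp add: algebra_simps)
  finally show ?thesis .
qed

lemma summable_bigo_inverse_square: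
  fixes f :: "nat \<Rightarrow> real"
  assumes "f \<in> O(\<lambda>n. 1 / real n ^ 2)"
  shows "summable f"
proof (rule summable_comparison_test_bigo[OF _ assms])
  show "summable (\<lambda>n. norm (1 / real n ^ 2))"
    using inverse_power_summable[of 2, where 'a = real] by (simp add: inverse_eq_divide)
qed

context wstar_chain
begin

lemma AE_wstar_path: "AE \<omega> in M. wstar_path (\<lambda>n. W n \<omega>)"
  using AE_admissible_history
proof eventually_elim
  case (elim \<omega>)
  show ?case
  proof
    show "W 0 \<omega> = 0" using elim[rule_format, of 0] by (simp add: admissible_def)
    fix n
    have "history (Suc n) \<omega> ! Suc n = history (Suc n) \<omega> ! n + 1 \<or>
        (2 \<le> history (Suc n) \<omega> ! n \<and> history (Suc n) \<omega> ! Suc n + 1 = history (Suc n) \<omega> ! n)"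
      using elim[rule_format, of "Suc n"] unfolding admissible_def by simp
    then show "W (Suc n) \<omega> = W n \<omega> + 1 \<or> (2 \<le> W n \<omega> \<and> W (Suc n) \<omega> + 1 = W n \<omega>)" by simp
  qed
qed

text \<open>Exponential Chebyshev bound with \<open>\<theta> = 1 / sqrt n\<close>; it decays like \<open>exp (- n powr \<delta>)\<close>.\<close>
lemma AE_below_powr:
  assumes "\<delta> > 0"
  shows "AE \<omega> in M. below_powr \<delta> (\<lambda>n. W n \<omega>)"
proof -
  define A where "A n = {\<omega> \<in> space M. real n powr (1/2 + \<delta>) \<le> real (W n \<omega>)}" for n
  define B where "B n = real n * sinh (1 / sqrt n) * exp (real n * ln (cosh (1 / sqrt n))) / sinh (real n powr \<delta>)"
    for n :: nat
  have "AE \<omega> in M. \<forall>\<^sub>F n in sequentially. \<omega> \<notin> A n"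
  proof (rule AE_eventually_not_in)
    show "A n \<in> sets M" for n unfolding A_def by measurable
    show "summable B" unfolding B_def by (rule summable_bigo_inverse_square) (use assms in real_asymp)
    fix n :: nat assume "n \<ge> 1"
    define \<theta> where "\<theta> = 1 / sqrt (real n)"
    have "\<theta> > 0" using \<open>n \<ge> 1\<close> by (simp add: \<theta>_def)
    have "\<theta> * real n powr (1/2 + \<delta>) = real n powr \<delta>"
      using \<open>n \<ge> 1\<close> by (simp add: \<theta>_def powr_add powr_half_sqrt)
    moreover have "cosh \<theta> ^ n = exp (real n * ln (cosh \<theta>))"
      using cosh_real_ge_1[of \<theta>] by (simp add: exp_of_nat_mult)
    ultimately show "prob (A n) \<le> B n"
      using prob_W_ge_le[OF \<open>\<theta> > 0\<close> _ \<open>n \<ge> 1\<close>, of "real n powr (1/2 + \<delta>)"] \<open>n \<ge> 1\<close>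
      by (simp add: A_def B_def \<theta>_def)
  qed
  with AE_space show ?thesis unfolding below_powr_def A_def by eventually_elim (auto elim!: eventually_mono)
qed

lemma AE_no_deep_return:
  assumes "0 < \<delta>" "\<delta> < 1"
  shows "AE \<omega> in M. no_deep_return \<delta> (\<lambda>n. W n \<omega>)"
proof -
  define x where "x i = (2::real) powr (real i * (1 - \<delta>))" for i :: nat
  define j where "j i = nat \<lfloor>x i\<rfloor>" for i
  define A where "A i = {\<omega> \<in> space M. \<exists>t s. t \<le> s \<and> 2 ^ i \<le> W t \<omega> \<and> W s \<omega> \<le> j i}" for i
  have x: "x i \<ge> 1" "real (j i) \<le> x i" "x i < real (j i) + 1" for i
    unfolding j_def x_def using assms by (auto intro: ge_one_powr_ge_zero)
  have "AE \<omega> in M. \<forall>\<^sub>F i in sequentially. \<omega> \<notin> A i"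
  proof (rule AE_eventually_not_in)
    show "A i \<in> sets M" for i unfolding A_def by measurable
    show "summable (\<lambda>i::nat. 2 powr (- (real i * \<delta>)))"
      by (rule summable_bigo_inverse_square) (use assms in real_asymp)
    fix i :: nat assume "i \<ge> 1"
    have "1 \<le> j i" using x(1,3)[of i] unfolding j_def by linarith
    have "x i < 2 powr real i" unfolding x_def using \<open>i \<ge> 1\<close> assms by (intro powr_less_mono) auto
    moreover have "(2::real) powr real i = 2 ^ i" by (simp add: powr_realpow)
    ultimately have "real (j i) < 2 ^ i" using x(2)[of i] by linarith
    then have "j i < 2 ^ i" by (metis of_nat_less_iff of_nat_numeral of_nat_power)
    have "prob (A i) \<le> real (j i) / 2 ^ i"
      unfolding A_def using prob_return_below_le[OF \<open>1 \<le> j i\<close> \<open>j i < 2 ^ i\<close>] by simp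
    also have "\<dots> \<le> x i / 2 powr real i" using x(2)[of i] by (simp add: divide_right_mono powr_realpow)
    also have "\<dots> = 2 powr (- (real i * \<delta>))" by (simp add: x_def powr_diff[symmetric] algebra_simps)
    finally show "prob (A i) \<le> 2 powr (- (real i * \<delta>))" .
  qed
  then show ?thesis unfolding no_deep_return_def
  proof (rule AE_mp, intro AE_I2 impI, elim eventually_mono, intro allI impI)
    fix \<omega> i t s assume "\<omega> \<in> space M" "\<omega> \<notin> A i" "t \<le> s" "2 ^ i \<le> W t \<omega>"
    then have "j i < W s \<omega>" unfolding A_def by (auto simp: not_le[symmetric])
    then show "2 powr (real i * (1 - \<delta>)) < real (W s \<omega>)" using x(3)[of i] unfolding x_def by linarith
  qed
qed

lemma AE_fast_escape:
  assumes "0 < \<delta>" "\<delta> < 1"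
  shows "AE \<omega> in M. fast_escape \<delta> (\<lambda>n. W n \<omega>)"
proof -
  define x where "x i = (2::real) powr (real i * (1 - \<delta>))" for i :: nat
  define b where "b i = nat \<lceil>x i\<rceil>" for i
  define A where "A i = {\<omega> \<in> space M. \<forall>s\<le>4 ^ i. W s \<omega> < b i}" for i
  have x1: "x i \<ge> 1" for i unfolding x_def using assms by (intro ge_one_powr_ge_zero) auto
  then have x: "x i \<le> real (b i)" "real (b i) \<le> 2 * x i" for i
    unfolding b_def by (rule nat_ceiling_le_double)+
  have "AE \<omega> in M. \<forall>\<^sub>F i in sequentially. \<omega> \<notin> A i"
  proof (rule AE_eventually_not_in)
    show "A i \<in> sets M" for i unfolding A_def by measurable
    show "summable (\<lambda>i::nat. 2 * 2 powr (- (2 * real i * \<delta>)))"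
      by (rule summable_bigo_inverse_square) (use assms in real_asymp)
    fix i :: nat assume "i \<ge> 1"
    have "x i > 1" unfolding x_def using assms \<open>i \<ge> 1\<close> by (intro gr_one_powr) auto
    then have "2 \<le> b i" unfolding b_def by linarith
    have "prob (A i) \<le> (2 + real (b i) ^ 2) / (3 * 4 ^ i)"
      unfolding A_def using prob_stay_below_le[OF \<open>2 \<le> b i\<close>, of "4 ^ i"] by simp
    also have "\<dots> \<le> 2 * (x i ^ 2 / 4 ^ i)"
    proof -
      have "real (b i) ^ 2 \<le> (2 * x i) ^ 2" using x[of i] x1[of i] by (intro power_mono) auto
      moreover have "(2 * x i) ^ 2 = 4 * x i ^ 2" by (simp add: power_mult_distrib)
      moreover have "1 \<le> x i ^ 2" using x1[of i] by (simp add: one_le_power)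
      ultimately have "2 + real (b i) ^ 2 \<le> 6 * x i ^ 2" by linarith
      then show ?thesis using divide_right_mono[of _ _ "3 * 4 ^ i"] by fastforce
    qed
    also have "\<dots> = 2 * 2 powr (- (2 * real i * \<delta>))"
      unfolding x_def dyadic_powr_square_div ..
    finally show "prob (A i) \<le> 2 * 2 powr (- (2 * real i * \<delta>))" .
  qed
  then show ?thesis unfolding fast_escape_def
  proof (rule AE_mp, intro AE_I2 impI, elim eventually_mono)
    fix \<omega> i assume "\<omega> \<in> space M" "\<omega> \<notin> A i"
    then obtain s where "s \<le> 4 ^ i" "b i \<le> W s \<omega>" by (auto simp: A_def not_less)
    then show "\<exists>s\<le>4 ^ i. 2 powr (real i * (1 - \<delta>)) \<le> real (W s \<omega>)"
      using x(1)[of i] unfolding x_def by (intro exI[of _ s]) auto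
  qed
qed

lemma AE_typical_path:
  "AE \<omega> in M. wstar_path (\<lambda>n. W n \<omega>) \<and>
     (\<forall>\<delta>>0. below_powr \<delta> (\<lambda>n. W n \<omega>) \<and> no_deep_return \<delta> (\<lambda>n. W n \<omega>) \<and> fast_escape \<delta> (\<lambda>n. W n \<omega>))"
proof -
  have "AE \<omega> in M. \<forall>\<delta>>0. below_powr \<delta> (\<lambda>n. W n \<omega>) \<and> no_deep_return \<delta> (\<lambda>n. W n \<omega>) \<and> fast_escape \<delta> (\<lambda>n. W n \<omega>)"
    using AE_below_powr AE_no_deep_return AE_fast_escape below_powr_mono no_deep_return_mono fast_escape_mono
    by (intro AE_all_pos_if_mono) (auto simp: AE_conj_iff)
  then show ?thesis using AE_wstar_path by (simp add: AE_conj_iff)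
qed

end

section \<open>From logarithmic growth bounds to the two limits\<close>

lemma tendsto_zero_if_eventually_between:
  fixes X :: "nat \<Rightarrow> real"
  assumes "\<And>e. e > 0 \<Longrightarrow> \<forall>\<^sub>F N in sequentially. 0 \<le> X N \<and> X N \<le> e"
  shows "X \<longlonglongrightarrow> 0"
proof (rule tendstoI)
  fix r :: real assume "r > 0"
  then have "\<forall>\<^sub>F N in sequentially. 0 \<le> X N \<and> X N \<le> r / 2" by (intro assms) simp
  then show "\<forall>\<^sub>F N in sequentially. dist (X N) 0 < r"
    by eventually_elim (use \<open>r > 0\<close> in auto)
qed

lemma eventually_const_div_ln_le:
  fixes C e :: real
  assumes "e > 0"
  shows "\<forall>\<^sub>F N in sequentially. 2 \<le> N \<and> C / ln (real N) \<le> e"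
proof -
  have "(\<lambda>N::nat. C / ln (real N)) \<longlonglongrightarrow> 0" by real_asymp
  then have "\<forall>\<^sub>F N in sequentially. C / ln (real N) < e" using assms by (rule order_tendstoD)
  then show ?thesis using eventually_ge_at_top[of 2] by eventually_elim auto
qed

lemma tendsto_sup_log_deviation:
  fixes w :: "nat \<Rightarrow> nat" and \<beta> :: real
  assumes "\<beta> > 0"
    and dev: "\<And>\<epsilon>. 0 < \<epsilon> \<Longrightarrow> \<epsilon> < 1 \<Longrightarrow>
      \<exists>C. \<forall>n. \<bar>ln (real (w n)) - ln (sqrt (real n))\<bar> \<le> \<epsilon> * ln (real n) + C"
  shows "(\<lambda>N::nat. SUP n\<in>{n::nat. 1 \<le> n \<and> real n \<le> real N powr \<beta>}.
            \<bar>log (real N) (real (w n)) - log (real N) (sqrt (real n))\<bar>) \<longlonglongrightarrow> 0"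
proof (rule tendsto_zero_if_eventually_between, goal_cases)
  case (1 e)
  define \<epsilon> where "\<epsilon> = min (1/2) (e / (2 * \<beta>))"
  have \<epsilon>: "0 < \<epsilon>" "\<epsilon> < 1" "\<epsilon> * \<beta> \<le> e / 2"
    using \<open>e > 0\<close> \<open>\<beta> > 0\<close> by (auto simp: \<epsilon>_def min_def field_simps)
  obtain C where C: "\<And>n. \<bar>ln (real (w n)) - ln (sqrt (real n))\<bar> \<le> \<epsilon> * ln (real n) + C"
    using dev[OF \<epsilon>(1,2)] by blast
  show ?case
    using eventually_const_div_ln_le[OF half_gt_zero[OF \<open>e > 0\<close>], of C]
  proof eventually_elim
    case (elim N)
    define S where "S = {n::nat. 1 \<le> n \<and> real n \<le> real N powr \<beta>}"
    define f where "f n = \<bar>log (real N) (real (w n)) - log (real N) (sqrt (real n))\<bar>" for n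
    have lnN: "ln (real N) > 0" using elim by simp
    have "1 \<in> S" unfolding S_def using elim \<open>\<beta> > 0\<close> by (simp add: ge_one_powr_ge_zero)
    have "S \<subseteq> {..nat \<lceil>real N powr \<beta>\<rceil>}" unfolding S_def by (auto simp: le_nat_iff) linarith
    then have "finite S" by (rule finite_subset) simp
    have "f n \<le> e" if "n \<in> S" for n
    proof -
      have n: "n \<ge> 1" "real n \<le> real N powr \<beta>" using that by (auto simp: S_def)
      then have "ln (real n) \<le> \<beta> * ln (real N)"
        using elim by (metis ln_le_cancel_iff ln_powr of_nat_0_less_iff less_le_trans zero_less_one
            of_nat_1 of_nat_le_iff powr_gt_zero)
      have "f n = \<bar>ln (real (w n)) - ln (sqrt (real n))\<bar> / ln (real N)"
        unfolding f_def log_def using lnN by (simp add: diff_divide_distrib[symmetric])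
      also have "\<dots> \<le> (\<epsilon> * (\<beta> * ln (real N)) + C) / ln (real N)"
        using C[of n] \<open>ln (real n) \<le> \<beta> * ln (real N)\<close> \<epsilon> lnN
        by (intro divide_right_mono) (auto intro: order.trans[OF _ add_right_mono[OF mult_left_mono]])
      also have "\<dots> = \<epsilon> * \<beta> + C / ln (real N)" using lnN by (simp add: field_simps)
      also have "\<dots> \<le> e" using \<epsilon>(3) elim by linarith
      finally show ?thesis .
    qed
    moreover have "0 \<le> f 1" by (simp add: f_def)
    ultimately show ?case
      using \<open>1 \<in> S\<close> \<open>finite S\<close> cSUP_upper[of 1 S f] cSUP_least[of S f e]
      unfolding S_def[symmetric] f_def[symmetric] by fastforce
  qed
qed

lemma tendsto_max_log_drop:
  fixes w :: "nat \<Rightarrow> nat"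
  assumes hit: "\<And>k. w (hit_time k w) = k" "\<And>k. hit_time k w < hit_time (Suc k) w"
    and drop: "\<And>\<epsilon>. 0 < \<epsilon> \<Longrightarrow> \<epsilon> < 1 \<Longrightarrow>
      \<exists>C. \<forall>k\<ge>1. \<forall>n\<ge>hit_time k w. ln (real k) - ln (real (w n)) \<le> \<epsilon> * ln (real k) + C"
  shows "(\<lambda>N::nat. Max ((\<lambda>k. Max ((\<lambda>n. log (real N) (real k) - log (real N) (real (w n)))
            ` {hit_time k w ..< hit_time (Suc k) w})) ` {1..N})) \<longlonglongrightarrow> 0"
proof (rule tendsto_zero_if_eventually_between, goal_cases)
  case (1 e)
  define \<epsilon> where "\<epsilon> = min (1/2) (e / 2)"
  have \<epsilon>: "0 < \<epsilon>" "\<epsilon> < 1" "\<epsilon> \<le> e / 2" using \<open>e > 0\<close> by (auto simp: \<epsilon>_def)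
  obtain C where C: "\<And>k n. k \<ge> 1 \<Longrightarrow> n \<ge> hit_time k w \<Longrightarrow> ln (real k) - ln (real (w n)) \<le> \<epsilon> * ln (real k) + C"
    using drop[OF \<epsilon>(1,2)] by blast
  show ?case
    using eventually_const_div_ln_le[OF half_gt_zero[OF \<open>e > 0\<close>], of C]
  proof eventually_elim
    case (elim N)
    define g where "g k = Max ((\<lambda>n. log (real N) (real k) - log (real N) (real (w n)))
        ` {hit_time k w ..< hit_time (Suc k) w})" for k
    have lnN: "ln (real N) > 0" using elim by simp
    have ne: "{hit_time k w ..< hit_time (Suc k) w} \<noteq> {}" for k using hit(2)[of k] by simp
    have term_le: "log (real N) (real k) - log (real N) (real (w n)) \<le> e"
      if k: "k \<in> {1..N}" and n: "n \<ge> hit_time k w" for k n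
    proof -
      have "log (real N) (real k) - log (real N) (real (w n)) = (ln (real k) - ln (real (w n))) / ln (real N)"
        unfolding log_def by (simp add: diff_divide_distrib)
      also have "\<dots> \<le> (\<epsilon> * ln (real N) + C) / ln (real N)"
        using C[OF _ n] k \<epsilon> lnN
        by (intro divide_right_mono) (auto intro: order.trans[OF _ add_right_mono[OF mult_left_mono]])
      also have "\<dots> = \<epsilon> + C / ln (real N)" using lnN by (simp add: field_simps)
      also have "\<dots> \<le> e" using \<epsilon>(3) elim by linarith
      finally show ?thesis .
    qed
    have g_le: "g k \<le> e" if "k \<in> {1..N}" for k
      unfolding g_def using ne term_le[OF that] by (subst Max_le_iff) auto
    have "0 \<le> g 1"
      using hit[of 1] unfolding g_def by (intro Max_ge_iff[THEN iffD2]) (auto intro!: bexI[of _ "hit_time 1 w"])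
    moreover have "g 1 \<le> Max (g ` {1..N})" using elim by (intro Max_ge) auto
    ultimately have "0 \<le> Max (g ` {1..N})" by linarith
    moreover have "Max (g ` {1..N}) \<le> e" using g_le elim by (subst Max_le_iff) auto
    ultimately show ?case by (simp add: g_def[abs_def])
  qed
qed

section \<open>Growth of a single typical path\<close>

lemma ex_offset_if_eventually_le:
  fixes f g :: "nat \<Rightarrow> real"
  assumes "\<forall>\<^sub>F n in sequentially. f n \<le> g n + C\<^sub>0"
  shows "\<exists>C. \<forall>n. f n \<le> g n + C"
proof -
  obtain N where N: "\<And>n. n \<ge> N \<Longrightarrow> f n \<le> g n + C\<^sub>0"
    using assms unfolding eventually_sequentially by blast
  define C where "C = \<bar>C\<^sub>0\<bar> + (\<Sum>m<N. \<bar>f m - g m\<bar>)"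
  have "f n \<le> g n + C" for n
  proof (cases "n < N")
    case True
    then have "\<bar>f n - g n\<bar> \<le> (\<Sum>m<N. \<bar>f m - g m\<bar>)"
      by (intro member_le_sum) auto
    then show ?thesis unfolding C_def by linarith
  next
    case False
    moreover have "0 \<le> (\<Sum>m<N. \<bar>f m - g m\<bar>)" by (intro sum_nonneg) simp
    ultimately show ?thesis using N[of n] unfolding C_def by linarith
  qed
  then show ?thesis by blast
qed

context wstar_path
begin

lemma pos: "n \<ge> 1 \<Longrightarrow> w n \<ge> 1"
  using step[of "n - 1"] by (cases n) auto

lemma hits_every_level_below: "k \<le> w s \<Longrightarrow> \<exists>t\<le>s. w t = k"
proof (induction s)
  case 0
  then show ?case using start by auto
next
  case (Suc s)
  show ?case
  proof (cases "k \<le> w s")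
    case True
    then show ?thesis using Suc.IH le_SucI by blast
  next
    case False
    then have "w (Suc s) = k" using Suc.prems step[of s] by auto
    then show ?thesis by blast
  qed
qed

text \<open>From dyadic levels to arbitrary levels, losing a factor \<open>2\<close>.\<close>
lemma stays_above_powr:
  assumes "0 < \<delta>" "\<delta> < 1" "no_deep_return \<delta> w"
  obtains K :: nat where "K \<ge> 1"
    "\<And>t s. t \<le> s \<Longrightarrow> K \<le> w t \<Longrightarrow> (real (w t) / 2) powr (1 - \<delta>) < real (w s)"
proof -
  obtain I where I: "\<And>i t s. i \<ge> I \<Longrightarrow> t \<le> s \<Longrightarrow> 2 ^ i \<le> w t \<Longrightarrow> 2 powr (real i * (1 - \<delta>)) < real (w s)"
    using assms(3) unfolding no_deep_return_def eventually_sequentially by blast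
  have "(real (w t) / 2) powr (1 - \<delta>) < real (w s)" if ts: "t \<le> s" "2 ^ I \<le> w t" for t s
  proof -
    have "1 \<le> w t" using ts(2) by (meson le_trans one_le_numeral one_le_power)
    then obtain i where i: "2 ^ i \<le> w t" "w t < 2 ^ Suc i" using ex_power_ivl1[of 2 "w t"] by auto
    have "(2::nat) ^ I < 2 ^ Suc i" using ts(2) i(2) by linarith
    then have "I < Suc i" by (rule power_less_imp_less_exp[rotated]) simp
    then have "I \<le> i" by simp
    have "real (w t) < 2 * 2 ^ i" using i(2) by (metis of_nat_less_iff of_nat_numeral of_nat_power power_Suc of_nat_mult)
    then have "real (w t) / 2 \<le> 2 powr real i" by (simp add: powr_realpow)
    then have "(real (w t) / 2) powr (1 - \<delta>) \<le> (2 powr real i) powr (1 - \<delta>)"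
      using assms by (intro powr_mono2) auto
    also have "\<dots> = 2 powr (real i * (1 - \<delta>))" by (simp add: powr_powr)
    also have "\<dots> < real (w s)" using I[OF \<open>I \<le> i\<close> ts(1) i(1)] .
    finally show ?thesis .
  qed
  then show ?thesis using that[of "2 ^ I"] by simp
qed

lemma eventually_escapes:
  assumes "0 < \<delta>" "\<delta> < 1" "fast_escape \<delta> w"
  shows "\<forall>\<^sub>F n in sequentially. \<exists>s\<le>n. (real n / 4) powr ((1 - \<delta>) / 2) \<le> real (w s)"
proof -
  obtain I where I: "\<And>i. i \<ge> I \<Longrightarrow> \<exists>s\<le>4 ^ i. 2 powr (real i * (1 - \<delta>)) \<le> real (w s)"
    using assms(3) unfolding fast_escape_def eventually_sequentially by blast
  have "\<exists>s\<le>n. (real n / 4) powr ((1 - \<delta>) / 2) \<le> real (w s)" if n: "n \<ge> 4 ^ I" for n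
  proof -
    have "1 \<le> n" using n by (meson le_trans one_le_numeral one_le_power)
    then obtain i where i: "4 ^ i \<le> n" "n < 4 ^ Suc i" using ex_power_ivl1[of 4 n] by auto
    have "(4::nat) ^ I < 4 ^ Suc i" using n i(2) by linarith
    then have "I < Suc i" by (rule power_less_imp_less_exp[rotated]) simp
    then have "I \<le> i" by simp
    obtain s where s: "s \<le> 4 ^ i" "2 powr (real i * (1 - \<delta>)) \<le> real (w s)" using I[OF \<open>I \<le> i\<close>] by blast
    have "real n < 4 * 4 ^ i" using i(2) by (metis of_nat_less_iff of_nat_numeral of_nat_power power_Suc of_nat_mult)
    then have "real n / 4 \<le> 4 powr real i" by (simp add: powr_realpow)
    then have "(real n / 4) powr ((1 - \<delta>) / 2) \<le> (4 powr real i) powr ((1 - \<delta>) / 2)"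
      using assms by (intro powr_mono2) auto
    also have "(4 powr real i) powr ((1 - \<delta>) / 2) = 2 powr (real i * (1 - \<delta>))"
      by (simp add: powr_powr powr_numeral[symmetric])
    finally show ?thesis using s i(1) by (intro exI[of _ s]) auto
  qed
  then show ?thesis unfolding eventually_sequentially by blast
qed

lemma ln_sqrt_minus_ln_le:
  assumes \<delta>: "0 < \<delta>" "\<delta> < 1" and "no_deep_return \<delta> w" "fast_escape \<delta> w"
  shows "\<exists>C. \<forall>n. ln (sqrt (real n)) - ln (real (w n)) \<le> \<delta> * ln (real n) + C"
proof -
  obtain K :: nat where K: "K \<ge> 1" "\<And>t s. t \<le> s \<Longrightarrow> K \<le> w t \<Longrightarrow> (real (w t) / 2) powr (1 - \<delta>) < real (w s)"
    using stays_above_powr[OF \<delta> assms(3)] by blast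
  define c where "c = (1 - \<delta>) / 2"
  have "c > 0" using \<delta> by (simp add: c_def)
  have "filterlim (\<lambda>n::nat. (real n / 4) powr c) at_top sequentially" using \<open>c > 0\<close> by real_asymp
  then have large: "\<forall>\<^sub>F n in sequentially. real K \<le> (real n / 4) powr c" by (simp add: filterlim_at_top)
  show ?thesis
  proof (rule ex_offset_if_eventually_le)
    show "\<forall>\<^sub>F n in sequentially.
        ln (sqrt (real n)) - ln (real (w n)) \<le> \<delta> * ln (real n) + (1 - \<delta>) * (c * ln 4 + ln 2)"
      using eventually_escapes[OF \<delta> assms(4), folded c_def] large eventually_ge_at_top[of 1]
    proof eventually_elim
      case (elim n)
      obtain s where s: "s \<le> n" "(real n / 4) powr c \<le> real (w s)" using elim(1) by blast
      have "real K \<le> real (w s)" using elim(2) s(2) by linarith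
      then have "K \<le> w s" by simp
      then have ws: "real (w s) \<ge> 1" using K(1) by linarith
      have "(real (w s) / 2) powr (1 - \<delta>) < real (w n)" by (rule K(2)[OF s(1) \<open>K \<le> w s\<close>])
      moreover have "0 < (real (w s) / 2) powr (1 - \<delta>)" using ws by simp
      ultimately have "ln ((real (w s) / 2) powr (1 - \<delta>)) < ln (real (w n))"
        by (metis ln_less_cancel_iff less_trans)
      then have a: "(1 - \<delta>) * (ln (real (w s)) - ln 2) < ln (real (w n))"
        using ws by (simp add: ln_div)
      have "ln ((real n / 4) powr c) \<le> ln (real (w s))"
        using s(2) elim(3) ws by (subst ln_le_cancel_iff) auto
      then have "c * (ln (real n) - ln 4) \<le> ln (real (w s))" using elim(3) by (simp add: ln_div)
      then have b: "(1 - \<delta>) * (c * (ln (real n) - ln 4)) \<le> (1 - \<delta>) * ln (real (w s))"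
        using \<delta> by (intro mult_left_mono) auto
      have "(1/2 - \<delta>) * ln (real n) \<le> (1 - \<delta>) * c * ln (real n)"
        using elim(3) unfolding c_def by (intro mult_right_mono) (auto simp: field_simps power2_eq_square)
      then show ?case
        using a b elim(3) by (simp add: ln_sqrt algebra_simps)
    qed
  qed
qed

lemma ln_minus_ln_sqrt_le:
  assumes "below_powr \<delta> w"
  shows "\<exists>C. \<forall>n. ln (real (w n)) - ln (sqrt (real n)) \<le> \<delta> * ln (real n) + C"
proof (rule ex_offset_if_eventually_le)
  show "\<forall>\<^sub>F n in sequentially. ln (real (w n)) - ln (sqrt (real n)) \<le> \<delta> * ln (real n) + 0"
    using assms[unfolded below_powr_def] eventually_ge_at_top[of 1]
  proof eventually_elim
    case (elim n)
    then have "ln (real (w n)) < ln (real n powr (1/2 + \<delta>))"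
      using pos[of n] by (subst ln_less_cancel_iff) auto
    then show ?case by (simp add: ln_sqrt algebra_simps)
  qed
qed

lemma exceeds_every_level:
  assumes "\<forall>n. ln (sqrt (real n)) - ln (real (w n)) \<le> ln (real n) / 4 + C"
  shows "\<exists>s. k \<le> w s"
proof -
  define n where "n = nat \<lceil>exp (4 * (C + ln (real k + 1)))\<rceil> + 1"
  have "n \<ge> 1" by (simp add: n_def)
  have "exp (4 * (C + ln (real k + 1))) \<le> real n" unfolding n_def by linarith
  then have "4 * (C + ln (real k + 1)) \<le> ln (real n)"
    by (metis exp_gt_zero exp_le_cancel_iff exp_ln less_le_trans)
  then have "ln (real k + 1) \<le> ln (real (w n))"
    using assms[rule_format, of n] by (simp add: ln_sqrt)
  then have "real k + 1 \<le> real (w n)" using pos[OF \<open>n \<ge> 1\<close>] by (subst (asm) ln_le_cancel_iff) auto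
  then show ?thesis by (intro exI[of _ n]) simp
qed

context
  assumes unbounded: "\<And>k. \<exists>s. k \<le> w s"
begin

lemma hit_time_eq: "w (hit_time k w) = k"
proof -
  obtain s where "k \<le> w s" using unbounded by blast
  then obtain t where "w t = k" using hits_every_level_below by blast
  then show ?thesis unfolding hit_time_def by (rule LeastI)
qed

lemma hit_time_less_Suc: "hit_time k w < hit_time (Suc k) w"
proof -
  obtain t where t: "t \<le> hit_time (Suc k) w" "w t = k"
    using hits_every_level_below[of k "hit_time (Suc k) w"] hit_time_eq[of "Suc k"] by auto
  have "hit_time k w \<le> t" unfolding hit_time_def using t(2) by (rule Least_le)
  moreover have "t \<noteq> hit_time (Suc k) w" using t(2) hit_time_eq[of "Suc k"] by auto
  ultimately show ?thesis using t(1) by linarith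
qed

lemma ln_minus_ln_after_hit_le:
  assumes \<delta>: "0 < \<delta>" "\<delta> < 1" and "no_deep_return \<delta> w"
  shows "\<exists>C. \<forall>k\<ge>1. \<forall>n\<ge>hit_time k w. ln (real k) - ln (real (w n)) \<le> \<delta> * ln (real k) + C"
proof -
  obtain K :: nat where K: "K \<ge> 1" "\<And>t s. t \<le> s \<Longrightarrow> K \<le> w t \<Longrightarrow> (real (w t) / 2) powr (1 - \<delta>) < real (w s)"
    using stays_above_powr[OF \<delta> assms(3)] by blast
  have "ln (real k) - ln (real (w n)) \<le> \<delta> * ln (real k) + (ln 2 + ln (real K))"
    if k: "k \<ge> 1" and n: "n \<ge> hit_time k w" for k n
  proof -
    have "n \<ge> 1" using n hit_time_eq[of k] start k by (cases n) auto
    then have wn: "ln (real (w n)) \<ge> 0" using pos by simp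
    have lK: "ln (real K) \<ge> 0" using K(1) by simp
    show ?thesis
    proof (cases "K \<le> k")
      case True
      have "(real k / 2) powr (1 - \<delta>) < real (w n)" using K(2)[OF n] True hit_time_eq[of k] by simp
      moreover have "0 < (real k / 2) powr (1 - \<delta>)" using k by simp
      ultimately have "ln ((real k / 2) powr (1 - \<delta>)) < ln (real (w n))"
        by (metis ln_less_cancel_iff less_trans)
      then have "(1 - \<delta>) * (ln (real k) - ln 2) < ln (real (w n))" using k by (simp add: ln_div)
      moreover have "(1 - \<delta>) * ln 2 \<le> ln 2" using \<delta> by (simp add: mult_le_cancel_right1)
      ultimately show ?thesis using lK by (simp add: algebra_simps)
    next
      case False
      then have "ln (real k) \<le> ln (real K)" using k by simp
      moreover have "\<delta> * ln (real k) \<ge> 0" using \<delta> k by simp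
      moreover have "0 \<le> ln (2::real)" by simp
      ultimately show ?thesis using wn by linarith
    qed
  qed
  then show ?thesis by blast
qed

end

lemma log_limits:
  assumes typical: "\<forall>\<delta>>0. below_powr \<delta> w \<and> no_deep_return \<delta> w \<and> fast_escape \<delta> w"
  shows "(\<forall>\<beta>::real. \<beta> > 0 \<longrightarrow>
            (\<lambda>N::nat. SUP n\<in>{n::nat. 1 \<le> n \<and> real n \<le> real N powr \<beta>}.
               \<bar>log (real N) (real (w n)) - log (real N) (sqrt (real n))\<bar>) \<longlonglongrightarrow> 0)
       \<and> (\<lambda>N::nat. Max ((\<lambda>k. Max ((\<lambda>n. log (real N) (real k) - log (real N) (real (w n)))
            ` {hit_time k w ..< hit_time (Suc k) w})) ` {1..N})) \<longlonglongrightarrow> 0"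
proof -
  have dev: "\<exists>C. \<forall>n. \<bar>ln (real (w n)) - ln (sqrt (real n))\<bar> \<le> \<epsilon> * ln (real n) + C"
    if \<epsilon>: "0 < \<epsilon>" "\<epsilon> < 1" for \<epsilon>
  proof -
    obtain C\<^sub>1 where "\<forall>n. ln (sqrt (real n)) - ln (real (w n)) \<le> \<epsilon> * ln (real n) + C\<^sub>1"
      using ln_sqrt_minus_ln_le[OF \<epsilon>] typical \<epsilon> by blast
    moreover obtain C\<^sub>2 where "\<forall>n. ln (real (w n)) - ln (sqrt (real n)) \<le> \<epsilon> * ln (real n) + C\<^sub>2"
      using ln_minus_ln_sqrt_le typical \<epsilon> by blast
    ultimately have "\<forall>n. \<bar>ln (real (w n)) - ln (sqrt (real n))\<bar> \<le> \<epsilon> * ln (real n) + max C\<^sub>1 C\<^sub>2"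
      by (smt (verit, best))
    then show ?thesis by blast
  qed
  have unb: "\<exists>s. k \<le> w s" for k
  proof -
    obtain C where "\<forall>n. ln (sqrt (real n)) - ln (real (w n)) \<le> 1/4 * ln (real n) + C"
      using ln_sqrt_minus_ln_le[of "1/4"] typical by force
    then show ?thesis by (intro exceeds_every_level) simp
  qed
  show ?thesis
    using tendsto_sup_log_deviation[OF _ dev]
      tendsto_max_log_drop[OF hit_time_eq[OF unb] hit_time_less_Suc[OF unb] ln_minus_ln_after_hit_le[OF unb]]
      typical
    by blast
qed

end

theorem propositionA6:
  fixes M :: "'a measure" and W :: "nat \<Rightarrow> 'a \<Rightarrow> nat"
  assumes "is_wstar_chain M W"
  shows "(\<forall>\<beta>::real. \<beta> > 0 \<longrightarrow>
           (AE \<omega> in M. ((\<lambda>N::nat.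
               (SUP n\<in>{n::nat. 1 \<le> n \<and> real n \<le> real N powr \<beta>}.
                  \<bar>log (real N) (real (W n \<omega>)) - log (real N) (sqrt (real n))\<bar>))
             \<longlongrightarrow> 0) sequentially))
       \<and> (AE \<omega> in M. ((\<lambda>N::nat.
               Max ((\<lambda>k. Max ((\<lambda>n. log (real N) (real k) - log (real N) (real (W n \<omega>)))
                               ` {hit_time k (\<lambda>m. W m \<omega>) ..< hit_time (Suc k) (\<lambda>m. W m \<omega>)}))
                    ` {1..N}))
             \<longlongrightarrow> 0) sequentially)"
proof -
  interpret wstar_chain M W by unfold_locales (rule assms)
  show ?thesis
    by (insert AE_typical_path, intro conjI allI impI; erule eventually_mono; blast dest: wstar_path.log_limits)
qed
end
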